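(* Let $G$ be a group with neutral element $e$, $R$ a unital ring, and $\alpha=(\{D_g\}_{g\in G},\{\alpha_g\}_{g\in G})$ a unital partial action of $G$ on $R$, with $1_g$ the multiplicative identity of $D_g$. Assume (a) $D_gD_h=(0)$ for all $g,h\in G$ with $g\ne h$ and $g,h\ne e$, and (b) the set $\{1_g\mid g\in G\}$ is finite. Then for every normal subgroup $N$ of $G$, the induced $G/N$-grading of the partial skew group ring $R\star_\alpha G=\bigoplus_{g\in G}D_g\delta_g$ makes it an epsilon-crossed product.
   Context: A unital partial action of $G$ on $R$ consists of unital ideals $D_g$ of $R$ and ring isomorphisms $\alpha_g\colon D_{g^{-1}}\to D_g$ such that $D_e=R$, $\alpha_e=\mathrm{id}_R$, $\alpha_g(D_{g^{-1}}D_h)=D_gD_{gh}$ for all $g,h$, and $\alpha_g(\alpha_h(x))=\alpha_{gh}(x)$ for all $x\in D_{h^{-1}}D_{(gh)^{-1}}$. The partial skew group ring $R\star_\alpha G=\bigoplus_gD_g\delta_g$ ($\delta_g$ formal symbols) has multiplication $(a_g\delta_g)(b_h\delta_h)=a_g\alpha_g(b_h1_{g^{-1}})\delta_{gh}$, and is $G$-graded by $\{D_g\delta_g\}$. The induced $G/N$-grading is $S_C=\bigoplus_{g\in C}D_g\delta_g$. A grading $\{T_h\}_{h\in H}$ is epsilon-strong if $T_hT_{h^{-1}}T_h=T_h$ for all $h$ ($AB$ = finite sums of products) and each $T_hT_{h^{-1}}$ has a multiplicative identity $\epsilon_h$. An element $s\in T_h$ is epsilon-invertible if there is $t\in T_{h^{-1}}$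 with $st=\epsilon_h$ and $ts=\epsilon_{h^{-1}}$. An epsilon-crossed product is an epsilon-strongly graded ring in which every $T_h$ contains an epsilon-invertible element. *)

theory Defs
  imports "HOL-Algebra.Algebra"
begin

inductive_set sum_prods :: "('a, 'm) ring_scheme \<Rightarrow> 'a set \<Rightarrow> 'a set \<Rightarrow> 'a set"
  for S :: "('a, 'm) ring_scheme" and A B :: "'a set" where
  sp_zero: "\<zero>\<^bsub>S\<^esub> \<in> sum_prods S A B"
| sp_prod: "a \<in> A \<Longrightarrow> b \<in> B \<Longrightarrow> a \<otimes>\<^bsub>S\<^esub> b \<in> sum_prods S A B"
| sp_add: "x \<in> sum_prods S A B \<Longrightarrow> y \<in> sum_prods S A B \<Longrightarrow> x \<oplus>\<^bsub>S\<^esub> y \<in> sum_prods S A B"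

definition is_mult_identity :: "('a, 'm) ring_scheme \<Rightarrow> 'a set \<Rightarrow> 'a \<Rightarrow> bool" where
  "is_mult_identity S A u \<longleftrightarrow> u \<in> A \<and> (\<forall>x\<in>A. u \<otimes>\<^bsub>S\<^esub> x = x \<and> x \<otimes>\<^bsub>S\<^esub> u = x)"

definition mult_identity :: "('a, 'm) ring_scheme \<Rightarrow> 'a set \<Rightarrow> 'a" where
  "mult_identity S A = (THE u. is_mult_identity S A u)"

definition unital_partial_action ::
  "('g, 'b) monoid_scheme \<Rightarrow> ('r, 'c) ring_scheme \<Rightarrow> ('g \<Rightarrow> 'r set) \<Rightarrow> ('g \<Rightarrow> 'r \<Rightarrow> 'r) \<Rightarrow> bool" where
  "unital_partial_action G R D \<alpha> \<longleftrightarrow>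
     (\<forall>g\<in>carrier G. ideal (D g) R \<and> (\<exists>u. is_mult_identity R (D g) u)) \<and>
     (\<forall>g\<in>carrier G. bij_betw (\<alpha> g) (D (inv\<^bsub>G\<^esub> g)) (D g) \<and>
        (\<forall>x\<in>D (inv\<^bsub>G\<^esub> g). \<forall>y\<in>D (inv\<^bsub>G\<^esub> g).
            \<alpha> g (x \<oplus>\<^bsub>R\<^esub> y) = \<alpha> g x \<oplus>\<^bsub>R\<^esub> \<alpha> g y \<and>
            \<alpha> g (x \<otimes>\<^bsub>R\<^esub> y) = \<alpha> g x \<otimes>\<^bsub>R\<^esub> \<alpha> g y)) \<and>
     D \<one>\<^bsub>G\<^esub> = carrier R \<and>
     (\<forall>x\<in>carrier R. \<alpha> \<one>\<^bsub>G\<^esub> x = x) \<and>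
     (\<forall>g\<in>carrier G. \<forall>h\<in>carrier G.
        \<alpha> g ` sum_prods R (D (inv\<^bsub>G\<^esub> g)) (D h) = sum_prods R (D g) (D (g \<otimes>\<^bsub>G\<^esub> h))) \<and>
     (\<forall>g\<in>carrier G. \<forall>h\<in>carrier G.
        \<forall>x\<in>sum_prods R (D (inv\<^bsub>G\<^esub> h)) (D (inv\<^bsub>G\<^esub> (g \<otimes>\<^bsub>G\<^esub> h))).
          \<alpha> g (\<alpha> h x) = \<alpha> (g \<otimes>\<^bsub>G\<^esub> h) x)"

definition unit_of_ideal :: "('r, 'c) ring_scheme \<Rightarrow> ('g \<Rightarrow> 'r set) \<Rightarrow> 'g \<Rightarrow> 'r" where
  "unit_of_ideal R D g = mult_identity R (D g)"

text \<open>Elements of the direct sum of the D_g delta_g are represented as finitely supported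
  functions f on carrier G with f g in D g (and f = 0 outside carrier G).\<close>

definition skew_support :: "('g, 'b) monoid_scheme \<Rightarrow> ('r, 'c) ring_scheme \<Rightarrow> ('g \<Rightarrow> 'r) \<Rightarrow> 'g set" where
  "skew_support G R f = {g \<in> carrier G. f g \<noteq> \<zero>\<^bsub>R\<^esub>}"

definition skew_mult ::
  "('r, 'c) ring_scheme \<Rightarrow> ('g, 'b) monoid_scheme \<Rightarrow> ('g \<Rightarrow> 'r set) \<Rightarrow> ('g \<Rightarrow> 'r \<Rightarrow> 'r)
     \<Rightarrow> ('g \<Rightarrow> 'r) \<Rightarrow> ('g \<Rightarrow> 'r) \<Rightarrow> 'g \<Rightarrow> 'r" where
  "skew_mult R G D \<alpha> f h x =
     (if x \<in> carrier G then
        (\<Oplus>\<^bsub>R\<^esub> g\<in>skew_support G R f.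
           f g \<otimes>\<^bsub>R\<^esub> \<alpha> g (h (inv\<^bsub>G\<^esub> g \<otimes>\<^bsub>G\<^esub> x) \<otimes>\<^bsub>R\<^esub> unit_of_ideal R D (inv\<^bsub>G\<^esub> g)))
      else \<zero>\<^bsub>R\<^esub>)"

definition partial_skew_group_ring ::
  "('r, 'c) ring_scheme \<Rightarrow> ('g, 'b) monoid_scheme \<Rightarrow> ('g \<Rightarrow> 'r set) \<Rightarrow> ('g \<Rightarrow> 'r \<Rightarrow> 'r)
     \<Rightarrow> ('g \<Rightarrow> 'r) ring" where
  "partial_skew_group_ring R G D \<alpha> =
    \<lparr> carrier = {f. (\<forall>g. g \<notin> carrier G \<longrightarrow> f g = \<zero>\<^bsub>R\<^esub>) \<and> (\<forall>g\<in>carrier G. f g \<in> D g)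
                    \<and> finite (skew_support G R f)},
      monoid.mult = skew_mult R G D \<alpha>,
      one = (\<lambda>g. if g = \<one>\<^bsub>G\<^esub> then \<one>\<^bsub>R\<^esub> else \<zero>\<^bsub>R\<^esub>),
      ring.zero = (\<lambda>g. \<zero>\<^bsub>R\<^esub>),
      ring.add = (\<lambda>f h g. f g \<oplus>\<^bsub>R\<^esub> h g) \<rparr>"

definition induced_quotient_component ::
  "('r, 'c) ring_scheme \<Rightarrow> ('g, 'b) monoid_scheme \<Rightarrow> ('g \<Rightarrow> 'r set) \<Rightarrow> ('g \<Rightarrow> 'r \<Rightarrow> 'r)
     \<Rightarrow> 'g set \<Rightarrow> ('g \<Rightarrow> 'r) set" where
  "induced_quotient_component R G D \<alpha> C =
     {f \<in> carrier (partial_skew_group_ring R G D \<alpha>). skew_support G R f \<subseteq> C}"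

definition is_grading :: "('s, 'm) ring_scheme \<Rightarrow> ('h, 'b) monoid_scheme \<Rightarrow> ('h \<Rightarrow> 's set) \<Rightarrow> bool" where
  "is_grading S H T \<longleftrightarrow>
     (\<forall>h\<in>carrier H. T h \<subseteq> carrier S \<and> \<zero>\<^bsub>S\<^esub> \<in> T h \<and>
        (\<forall>x\<in>T h. \<forall>y\<in>T h. x \<oplus>\<^bsub>S\<^esub> y \<in> T h \<and> \<ominus>\<^bsub>S\<^esub> x \<in> T h)) \<and>
     (\<forall>g\<in>carrier H. \<forall>h\<in>carrier H. \<forall>x\<in>T g. \<forall>y\<in>T h. x \<otimes>\<^bsub>S\<^esub> y \<in> T (g \<otimes>\<^bsub>H\<^esub> h)) \<and>
     (\<forall>s\<in>carrier S. \<exists>!x. (\<forall>h. h \<notin> carrier H \<longrightarrow> x h = \<zero>\<^bsub>S\<^esub>) \<and> (\<forall>h\<in>carrier H. x h \<in> T h) \<and>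
        finite {h \<in> carrier H. x h \<noteq> \<zero>\<^bsub>S\<^esub>} \<and>
        s = (\<Oplus>\<^bsub>S\<^esub> h\<in>{h \<in> carrier H. x h \<noteq> \<zero>\<^bsub>S\<^esub>}. x h))"

definition epsilon_strong :: "('s, 'm) ring_scheme \<Rightarrow> ('h, 'b) monoid_scheme \<Rightarrow> ('h \<Rightarrow> 's set) \<Rightarrow> bool" where
  "epsilon_strong S H T \<longleftrightarrow> is_grading S H T \<and>
     (\<forall>h\<in>carrier H.
        sum_prods S (sum_prods S (T h) (T (inv\<^bsub>H\<^esub> h))) (T h) = T h \<and>
        (\<exists>u. is_mult_identity S (sum_prods S (T h) (T (inv\<^bsub>H\<^esub> h))) u))"

definition epsilon_unit :: "('s, 'm) ring_scheme \<Rightarrow> ('h, 'b) monoid_scheme \<Rightarrow> ('h \<Rightarrow> 's set) \<Rightarrow> 'h \<Rightarrow> 's" where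
  "epsilon_unit S H T h = mult_identity S (sum_prods S (T h) (T (inv\<^bsub>H\<^esub> h)))"

definition epsilon_invertible :: "('s, 'm) ring_scheme \<Rightarrow> ('h, 'b) monoid_scheme \<Rightarrow> ('h \<Rightarrow> 's set) \<Rightarrow> 'h \<Rightarrow> 's \<Rightarrow> bool" where
  "epsilon_invertible S H T h s \<longleftrightarrow> s \<in> T h \<and>
     (\<exists>t\<in>T (inv\<^bsub>H\<^esub> h). s \<otimes>\<^bsub>S\<^esub> t = epsilon_unit S H T h \<and>
                         t \<otimes>\<^bsub>S\<^esub> s = epsilon_unit S H T (inv\<^bsub>H\<^esub> h))"

definition epsilon_crossed_product :: "('s, 'm) ring_scheme \<Rightarrow> ('h, 'b) monoid_scheme \<Rightarrow> ('h \<Rightarrow> 's set) \<Rightarrow> bool" where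
  "epsilon_crossed_product S H T \<longleftrightarrow> epsilon_strong S H T \<and>
     (\<forall>h\<in>carrier H. \<exists>s. epsilon_invertible S H T h s)"

end

theory Submission
  imports Defs
begin

text \<open>
  Grade S = R \<star>\<alpha> G by the cosets C of N, where T(C) consists of the elements supported
  in C. For the trivial coset, 1 lies in T(N) and is the identity of T(N) T(N).
  For C \<noteq> N no element of C or of C\<inverse> is e. If a \<in> T(C) and b \<in> T(C\<inverse>), the summand
  a(g) \<alpha>(g)(b(g\<inverse>x) 1(g\<inverse>)) of (ab)(x) multiplies D(g\<inverse>x) by D(g\<inverse>), which vanishes by
  orthogonality unless x = e. Hence T(C) T(C\<inverse>) lies in R\<delta>(e), inside the corner
  \<epsilon>(C) R \<epsilon>(C) of \<epsilon>(C) = \<Sum> 1(g) over g \<in> C. This sum is finite: orthogonality makes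
  g \<mapsto> 1(g) injective on the g \<noteq> e with 1(g) \<noteq> 0, and its image is finite.
  The section s(C) = \<Sum> 1(g)\<delta>(g) over g \<in> C satisfies s(C) s(C\<inverse>) = \<epsilon>(C)\<delta>(e), which is
  the identity of T(C) T(C\<inverse>) and acts as the identity on T(C). So s(C) is
  epsilon-invertible, with inverse s(C\<inverse>).
\<close>

section \<open>Epsilon-crossed products\<close>

lemma is_mult_identity_unique:
  assumes "is_mult_identity S A u" and "is_mult_identity S A v"
  shows "u = v"
proof -
  have "v \<in> A" "\<forall>x\<in>A. u \<otimes>\<^bsub>S\<^esub> x = x" "u \<in> A" "\<forall>x\<in>A. x \<otimes>\<^bsub>S\<^esub> v = x"
    using assms unfolding is_mult_identity_def by blast+
  then show ?thesis by metis
qed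

lemma mult_identity_eqI:
  assumes "is_mult_identity S A u"
  shows "mult_identity S A = u"
  unfolding mult_identity_def
proof (rule the_equality)
  show "is_mult_identity S A u" by fact
  fix v assume "is_mult_identity S A v"
  then show "v = u" using is_mult_identity_unique[OF _ assms] by blast
qed

lemma sum_prods_subset:
  fixes S :: "('a, 'm) ring_scheme"
  assumes "\<zero>\<^bsub>S\<^esub> \<in> M"
    and "\<And>a b. a \<in> A \<Longrightarrow> b \<in> B \<Longrightarrow> a \<otimes>\<^bsub>S\<^esub> b \<in> M"
    and "\<And>x y. x \<in> M \<Longrightarrow> y \<in> M \<Longrightarrow> x \<oplus>\<^bsub>S\<^esub> y \<in> M"
  shows "sum_prods S A B \<subseteq> M"
proof
  fix x assume "x \<in> sum_prods S A B"
  then show "x \<in> M"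
    by (induction rule: sum_prods.induct) (simp_all add: assms)
qed

lemma sum_prods_mono:
  assumes "A \<subseteq> A'" and "B \<subseteq> B'"
  shows "sum_prods S A B \<subseteq> sum_prods S A' B'"
proof (rule sum_prods_subset)
  show "\<And>a b. a \<in> A \<Longrightarrow> b \<in> B \<Longrightarrow> a \<otimes>\<^bsub>S\<^esub> b \<in> sum_prods S A' B'"
    using assms by (intro sum_prods.sp_prod) auto
qed (rule sum_prods.sp_zero, rule sum_prods.sp_add)

lemma (in abelian_monoid) finsum_mem:
  assumes "finite A" and "f \<in> A \<rightarrow> M" and "M \<subseteq> carrier G" and "\<zero> \<in> M"
    and "\<And>x y. x \<in> M \<Longrightarrow> y \<in> M \<Longrightarrow> x \<oplus> y \<in> M"
  shows "finsum G f A \<in> M"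
  using assms(1,2)
proof (induction A rule: finite_induct)
  case (insert a A)
  then show ?case using assms(3-5) by (subst finsum_insert) auto
qed (use assms(4) in simp)

lemma (in abelian_monoid) finsum_eq_single:
  assumes "finite A" and "f \<in> A \<rightarrow> carrier G" and "\<And>j. j \<in> A \<Longrightarrow> j \<noteq> i \<Longrightarrow> f j = \<zero>"
  shows "finsum G f A = (if i \<in> A then f i else \<zero>)"
proof -
  have "finsum G f A = (\<Oplus>j\<in>A. if i = j then f j else \<zero>)"
    using assms(2,3) by (intro finsum_cong') auto
  also have "\<dots> = (if i \<in> A then f i else \<zero>)"
    using finsum_singleton[of i A f] assms(1,2) by (cases "i \<in> A") (auto intro: add.finprod_one_eqI)
  finally show ?thesis .
qed

lemma grading_sum_prods_subset:
  assumes "monoid H" and "is_grading S H T" and "g \<in> carrier H" and "h \<in> carrier H"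
  shows "sum_prods S (T g) (T h) \<subseteq> T (g \<otimes>\<^bsub>H\<^esub> h)"
proof (rule sum_prods_subset)
  have "g \<otimes>\<^bsub>H\<^esub> h \<in> carrier H" using assms(1,3,4) by (rule monoid.m_closed)
  then show "\<zero>\<^bsub>S\<^esub> \<in> T (g \<otimes>\<^bsub>H\<^esub> h)"
    and "\<And>x y. x \<in> T (g \<otimes>\<^bsub>H\<^esub> h) \<Longrightarrow> y \<in> T (g \<otimes>\<^bsub>H\<^esub> h) \<Longrightarrow> x \<oplus>\<^bsub>S\<^esub> y \<in> T (g \<otimes>\<^bsub>H\<^esub> h)"
    using assms(2) unfolding is_grading_def by simp_all
  show "\<And>a b. a \<in> T g \<Longrightarrow> b \<in> T h \<Longrightarrow> a \<otimes>\<^bsub>S\<^esub> b \<in> T (g \<otimes>\<^bsub>H\<^esub> h)"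
    using assms(2-4) unfolding is_grading_def by simp
qed

lemma epsilon_crossed_productI:
  assumes "group H" and "is_grading S H T"
    and "\<And>h. h \<in> carrier H \<Longrightarrow> \<exists>s\<in>T h. \<exists>t\<in>T (inv\<^bsub>H\<^esub> h).
           is_mult_identity S (sum_prods S (T h) (T (inv\<^bsub>H\<^esub> h))) (s \<otimes>\<^bsub>S\<^esub> t) \<and>
           is_mult_identity S (sum_prods S (T (inv\<^bsub>H\<^esub> h)) (T h)) (t \<otimes>\<^bsub>S\<^esub> s) \<and>
           (\<forall>x\<in>T h. (s \<otimes>\<^bsub>S\<^esub> t) \<otimes>\<^bsub>S\<^esub> x = x)"
  shows "epsilon_crossed_product S H T"
  unfolding epsilon_crossed_product_def epsilon_strong_def
proof (intro conjI ballI)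
  interpret H: group H by fact
  fix h assume h: "h \<in> carrier H"
  let ?P = "sum_prods S (T h) (T (inv\<^bsub>H\<^esub> h))"
  obtain s t where s: "s \<in> T h" and t: "t \<in> T (inv\<^bsub>H\<^esub> h)"
    and st: "is_mult_identity S ?P (s \<otimes>\<^bsub>S\<^esub> t)"
    and ts: "is_mult_identity S (sum_prods S (T (inv\<^bsub>H\<^esub> h)) (T h)) (t \<otimes>\<^bsub>S\<^esub> s)"
    and st_left: "\<forall>x\<in>T h. (s \<otimes>\<^bsub>S\<^esub> t) \<otimes>\<^bsub>S\<^esub> x = x"
    using assms(3)[OF h] by blast
  show "\<exists>u. is_mult_identity S ?P u" using st by blast
  show "sum_prods S ?P (T h) = T h"
  proof
    have "?P \<subseteq> T \<one>\<^bsub>H\<^esub>"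
      using grading_sum_prods_subset[OF H.monoid_axioms assms(2) h H.inv_closed[OF h]] h by simp
    then have "sum_prods S ?P (T h) \<subseteq> sum_prods S (T \<one>\<^bsub>H\<^esub>) (T h)"
      by (rule sum_prods_mono) simp
    also have "\<dots> \<subseteq> T h"
      using grading_sum_prods_subset[OF H.monoid_axioms assms(2) H.one_closed h] h by simp
    finally show "sum_prods S ?P (T h) \<subseteq> T h" .
    have "s \<otimes>\<^bsub>S\<^esub> t \<in> ?P"
      using st unfolding is_mult_identity_def by (rule conjunct1)
    show "T h \<subseteq> sum_prods S ?P (T h)"
    proof
      fix x assume "x \<in> T h"
      then have "(s \<otimes>\<^bsub>S\<^esub> t) \<otimes>\<^bsub>S\<^esub> x \<in> sum_prods S ?P (T h)"
        using \<open>s \<otimes>\<^bsub>S\<^esub> t \<in> ?P\<close> by (rule sum_prods.sp_prod[rotated])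
      then show "x \<in> sum_prods S ?P (T h)" using st_left \<open>x \<in> T h\<close> by simp
    qed
  qed
  have "epsilon_unit S H T h = s \<otimes>\<^bsub>S\<^esub> t"
    unfolding epsilon_unit_def using st by (rule mult_identity_eqI)
  moreover have "epsilon_unit S H T (inv\<^bsub>H\<^esub> h) = t \<otimes>\<^bsub>S\<^esub> s"
    unfolding epsilon_unit_def using ts h by (simp add: mult_identity_eqI)
  ultimately show "\<exists>s. epsilon_invertible S H T h s"
    unfolding epsilon_invertible_def using s t by (intro exI[of _ s] conjI bexI[of _ t]) auto
qed (rule assms(2))

section \<open>Partial skew group rings\<close>

locale unital_partial_action_ring = G: group G + R: ring R
  for G :: "('g, 'b) monoid_scheme" and R :: "('r, 'c) ring_scheme" +
  fixes D :: "'g \<Rightarrow> 'r set" and \<alpha> :: "'g \<Rightarrow> 'r \<Rightarrow> 'r"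
  assumes partial_action: "unital_partial_action G R D \<alpha>"
begin

abbreviation ideal_one :: "'g \<Rightarrow> 'r" where
  "ideal_one \<equiv> unit_of_ideal R D"

lemma ideal_D: "g \<in> carrier G \<Longrightarrow> ideal (D g) R"
  using partial_action by (simp add: unital_partial_action_def)

lemma D_subset: "g \<in> carrier G \<Longrightarrow> D g \<subseteq> carrier R"
  by (rule additive_subgroup.a_subset[OF ideal.axioms(1)[OF ideal_D]])

lemma D_zero_closed: "g \<in> carrier G \<Longrightarrow> \<zero>\<^bsub>R\<^esub> \<in> D g"
  by (rule additive_subgroup.zero_closed[OF ideal.axioms(1)[OF ideal_D]])

lemma D_a_closed: "g \<in> carrier G \<Longrightarrow> x \<in> D g \<Longrightarrow> y \<in> D g \<Longrightarrow> x \<oplus>\<^bsub>R\<^esub> y \<in> D g"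
  by (rule additive_subgroup.a_closed[OF ideal.axioms(1)[OF ideal_D]])

lemma D_a_inv_closed: "g \<in> carrier G \<Longrightarrow> x \<in> D g \<Longrightarrow> \<ominus>\<^bsub>R\<^esub> x \<in> D g"
  by (rule additive_subgroup.a_inv_closed[OF ideal.axioms(1)[OF ideal_D]])

lemma D_l_closed: "g \<in> carrier G \<Longrightarrow> x \<in> D g \<Longrightarrow> r \<in> carrier R \<Longrightarrow> r \<otimes>\<^bsub>R\<^esub> x \<in> D g"
  by (rule ideal.I_l_closed[OF ideal_D])

lemma D_r_closed: "g \<in> carrier G \<Longrightarrow> x \<in> D g \<Longrightarrow> r \<in> carrier R \<Longrightarrow> x \<otimes>\<^bsub>R\<^esub> r \<in> D g"
  by (rule ideal.I_r_closed[OF ideal_D])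

lemma D_one: "D \<one>\<^bsub>G\<^esub> = carrier R"
  using partial_action by (simp add: unital_partial_action_def)

lemma alpha_one: "x \<in> carrier R \<Longrightarrow> \<alpha> \<one>\<^bsub>G\<^esub> x = x"
  using partial_action by (simp add: unital_partial_action_def)

lemma alpha_bij: "g \<in> carrier G \<Longrightarrow> bij_betw (\<alpha> g) (D (inv\<^bsub>G\<^esub> g)) (D g)"
  using partial_action by (simp add: unital_partial_action_def)

lemma alpha_closed: "g \<in> carrier G \<Longrightarrow> x \<in> D (inv\<^bsub>G\<^esub> g) \<Longrightarrow> \<alpha> g x \<in> D g"
  using alpha_bij bij_betwE by blast

lemma alpha_add:
  "g \<in> carrier G \<Longrightarrow> x \<in> D (inv\<^bsub>G\<^esub> g) \<Longrightarrow> y \<in> D (inv\<^bsub>G\<^esub> g) \<Longrightarrow>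
    \<alpha> g (x \<oplus>\<^bsub>R\<^esub> y) = \<alpha> g x \<oplus>\<^bsub>R\<^esub> \<alpha> g y"
  using partial_action by (simp add: unital_partial_action_def)

lemma alpha_mult:
  "g \<in> carrier G \<Longrightarrow> x \<in> D (inv\<^bsub>G\<^esub> g) \<Longrightarrow> y \<in> D (inv\<^bsub>G\<^esub> g) \<Longrightarrow>
    \<alpha> g (x \<otimes>\<^bsub>R\<^esub> y) = \<alpha> g x \<otimes>\<^bsub>R\<^esub> \<alpha> g y"
  using partial_action by (simp add: unital_partial_action_def)

lemma alpha_sum_prods:
  "g \<in> carrier G \<Longrightarrow> h \<in> carrier G \<Longrightarrow>
    \<alpha> g ` sum_prods R (D (inv\<^bsub>G\<^esub> g)) (D h) = sum_prods R (D g) (D (g \<otimes>\<^bsub>G\<^esub> h))"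
  using partial_action by (simp add: unital_partial_action_def)

lemma alpha_zero:
  assumes "g \<in> carrier G"
  shows "\<alpha> g \<zero>\<^bsub>R\<^esub> = \<zero>\<^bsub>R\<^esub>"
proof -
  have zero: "\<zero>\<^bsub>R\<^esub> \<in> D (inv\<^bsub>G\<^esub> g)" using assms D_zero_closed by simp
  then have "\<alpha> g \<zero>\<^bsub>R\<^esub> \<in> carrier R" using assms alpha_closed D_subset by blast
  moreover have "\<alpha> g \<zero>\<^bsub>R\<^esub> = \<alpha> g \<zero>\<^bsub>R\<^esub> \<oplus>\<^bsub>R\<^esub> \<alpha> g \<zero>\<^bsub>R\<^esub>"
    using alpha_add[OF assms zero zero] by simp
  ultimately show ?thesis using R.add.l_cancel_one' by metis
qed

lemma ideal_one_is_mult_identity: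
  assumes "g \<in> carrier G"
  shows "is_mult_identity R (D g) (ideal_one g)"
proof -
  have "\<exists>u. is_mult_identity R (D g) u"
    using partial_action assms by (simp add: unital_partial_action_def)
  then obtain u where "is_mult_identity R (D g) u" ..
  then show ?thesis unfolding unit_of_ideal_def by (simp add: mult_identity_eqI)
qed

lemma ideal_one_closed: "g \<in> carrier G \<Longrightarrow> ideal_one g \<in> D g"
  using ideal_one_is_mult_identity unfolding is_mult_identity_def by blast

lemma ideal_one_carrier: "g \<in> carrier G \<Longrightarrow> ideal_one g \<in> carrier R"
  using ideal_one_closed D_subset by blast

lemma ideal_one_l: "g \<in> carrier G \<Longrightarrow> x \<in> D g \<Longrightarrow> ideal_one g \<otimes>\<^bsub>R\<^esub> x = x"
  using ideal_one_is_mult_identity unfolding is_mult_identity_def by blast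

lemma ideal_one_r: "g \<in> carrier G \<Longrightarrow> x \<in> D g \<Longrightarrow> x \<otimes>\<^bsub>R\<^esub> ideal_one g = x"
  using ideal_one_is_mult_identity unfolding is_mult_identity_def by blast

lemma ideal_one_one: "ideal_one \<one>\<^bsub>G\<^esub> = \<one>\<^bsub>R\<^esub>"
proof -
  have "is_mult_identity R (D \<one>\<^bsub>G\<^esub>) \<one>\<^bsub>R\<^esub>"
    unfolding is_mult_identity_def D_one by simp
  then show ?thesis
    using ideal_one_is_mult_identity[OF G.one_closed] is_mult_identity_unique by metis
qed

lemma alpha_ideal_one:
  assumes g: "g \<in> carrier G"
  shows "\<alpha> g (ideal_one (inv\<^bsub>G\<^esub> g)) = ideal_one g"
proof -
  have g': "inv\<^bsub>G\<^esub> g \<in> carrier G" using g by simp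
  have "is_mult_identity R (D g) (\<alpha> g (ideal_one (inv\<^bsub>G\<^esub> g)))"
    unfolding is_mult_identity_def
  proof (intro conjI ballI)
    show "\<alpha> g (ideal_one (inv\<^bsub>G\<^esub> g)) \<in> D g"
      using g g' ideal_one_closed alpha_closed by blast
    fix x assume "x \<in> D g"
    then obtain y where y: "y \<in> D (inv\<^bsub>G\<^esub> g)" and x: "x = \<alpha> g y"
      using alpha_bij[OF g] unfolding bij_betw_def by blast
    show "\<alpha> g (ideal_one (inv\<^bsub>G\<^esub> g)) \<otimes>\<^bsub>R\<^esub> x = x"
      unfolding x using alpha_mult[OF g ideal_one_closed[OF g'] y] ideal_one_l[OF g' y] by simp
    show "x \<otimes>\<^bsub>R\<^esub> \<alpha> g (ideal_one (inv\<^bsub>G\<^esub> g)) = x"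
      unfolding x using alpha_mult[OF g y ideal_one_closed[OF g']] ideal_one_r[OF g' y] by simp
  qed
  then show ?thesis using ideal_one_is_mult_identity[OF g] is_mult_identity_unique by metis
qed

lemma sum_prods_D_subset:
  assumes "h \<in> carrier G" and "A \<subseteq> carrier R"
  shows "sum_prods R A (D h) \<subseteq> D h"
  using assms D_zero_closed D_l_closed D_a_closed by (intro sum_prods_subset) blast+

lemma alpha_closed_Int:
  assumes g: "g \<in> carrier G" and k: "k \<in> carrier G"
    and x: "x \<in> D (inv\<^bsub>G\<^esub> g)" and x': "x \<in> D k"
  shows "\<alpha> g x \<in> D (g \<otimes>\<^bsub>G\<^esub> k)"
proof -
  have g': "inv\<^bsub>G\<^esub> g \<in> carrier G" using g by simp
  have "ideal_one (inv\<^bsub>G\<^esub> g) \<otimes>\<^bsub>R\<^esub> x \<in> sum_prods R (D (inv\<^bsub>G\<^esub> g)) (D k)"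
    using ideal_one_closed[OF g'] x' by (rule sum_prods.sp_prod)
  then have "x \<in> sum_prods R (D (inv\<^bsub>G\<^esub> g)) (D k)"
    unfolding ideal_one_l[OF g' x] .
  then have "\<alpha> g x \<in> sum_prods R (D g) (D (g \<otimes>\<^bsub>G\<^esub> k))"
    unfolding alpha_sum_prods[OF g k, symmetric] by (rule imageI)
  then show ?thesis
    using sum_prods_D_subset[OF G.m_closed[OF g k] D_subset[OF g]] by (rule subsetD[rotated])
qed

abbreviation S :: "('g \<Rightarrow> 'r) ring" where
  "S \<equiv> partial_skew_group_ring R G D \<alpha>"

abbreviation supp :: "('g \<Rightarrow> 'r) \<Rightarrow> 'g set" where
  "supp \<equiv> skew_support G R"

lemma mem_skew_support: "x \<in> supp f \<longleftrightarrow> x \<in> carrier G \<and> f x \<noteq> \<zero>\<^bsub>R\<^esub>"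
  by (simp add: skew_support_def)

lemma skew_support_subset: "supp f \<subseteq> carrier G"
  by (auto simp: skew_support_def)

lemma carrier_skew_iff:
  "f \<in> carrier S \<longleftrightarrow>
     (\<forall>g. g \<notin> carrier G \<longrightarrow> f g = \<zero>\<^bsub>R\<^esub>) \<and> (\<forall>g\<in>carrier G. f g \<in> D g) \<and> finite (supp f)"
  by (simp add: partial_skew_group_ring_def)

lemma skew_add: "f \<oplus>\<^bsub>S\<^esub> h = (\<lambda>g. f g \<oplus>\<^bsub>R\<^esub> h g)"
  by (simp add: partial_skew_group_ring_def)

lemma skew_zero: "\<zero>\<^bsub>S\<^esub> = (\<lambda>g. \<zero>\<^bsub>R\<^esub>)"
  by (simp add: partial_skew_group_ring_def)

lemma skew_carrier_outside: "f \<in> carrier S \<Longrightarrow> g \<notin> carrier G \<Longrightarrow> f g = \<zero>\<^bsub>R\<^esub>"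
  by (simp add: carrier_skew_iff)

lemma skew_carrier_D: "f \<in> carrier S \<Longrightarrow> g \<in> carrier G \<Longrightarrow> f g \<in> D g"
  by (simp add: carrier_skew_iff)

lemma skew_carrier_finite: "f \<in> carrier S \<Longrightarrow> finite (supp f)"
  by (simp add: carrier_skew_iff)

lemma skew_carrier_value:
  assumes "f \<in> carrier S"
  shows "f g \<in> carrier R"
proof (cases "g \<in> carrier G")
  case True
  then show ?thesis using skew_carrier_D[OF assms] D_subset by blast
qed (simp add: skew_carrier_outside[OF assms])

definition skew_term :: "('g \<Rightarrow> 'r) \<Rightarrow> ('g \<Rightarrow> 'r) \<Rightarrow> 'g \<Rightarrow> 'g \<Rightarrow> 'r" where
  "skew_term f h x g = f g \<otimes>\<^bsub>R\<^esub> \<alpha> g (h (inv\<^bsub>G\<^esub> g \<otimes>\<^bsub>G\<^esub> x) \<otimes>\<^bsub>R\<^esub> ideal_one (inv\<^bsub>G\<^esub> g))"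

lemma skew_mult_apply:
  "x \<in> carrier G \<Longrightarrow> (f \<otimes>\<^bsub>S\<^esub> h) x = (\<Oplus>\<^bsub>R\<^esub> g\<in>supp f. skew_term f h x g)"
  by (simp add: partial_skew_group_ring_def skew_mult_def skew_term_def)

lemma skew_mult_outside: "x \<notin> carrier G \<Longrightarrow> (f \<otimes>\<^bsub>S\<^esub> h) x = \<zero>\<^bsub>R\<^esub>"
  by (simp add: partial_skew_group_ring_def skew_mult_def)

lemma skew_term_closed_source:
  assumes f: "f \<in> carrier S" and h: "h \<in> carrier S" and g: "g \<in> carrier G"
  shows "skew_term f h x g \<in> D g"
proof -
  have g': "inv\<^bsub>G\<^esub> g \<in> carrier G" using g by simp
  have "h (inv\<^bsub>G\<^esub> g \<otimes>\<^bsub>G\<^esub> x) \<otimes>\<^bsub>R\<^esub> ideal_one (inv\<^bsub>G\<^esub> g) \<in> D (inv\<^bsub>G\<^esub> g)"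
    using g' ideal_one_closed[OF g'] skew_carrier_value[OF h] by (rule D_l_closed)
  then have "\<alpha> g (h (inv\<^bsub>G\<^esub> g \<otimes>\<^bsub>G\<^esub> x) \<otimes>\<^bsub>R\<^esub> ideal_one (inv\<^bsub>G\<^esub> g)) \<in> carrier R"
    using alpha_closed[OF g] D_subset[OF g] by blast
  then show ?thesis
    unfolding skew_term_def by (rule D_r_closed[OF g skew_carrier_D[OF f g]])
qed

lemma skew_term_closed_target:
  assumes f: "f \<in> carrier S" and h: "h \<in> carrier S" and g: "g \<in> carrier G" and x: "x \<in> carrier G"
  shows "skew_term f h x g \<in> D x"
proof -
  define k where "k = inv\<^bsub>G\<^esub> g \<otimes>\<^bsub>G\<^esub> x"
  have g': "inv\<^bsub>G\<^esub> g \<in> carrier G" and k: "k \<in> carrier G" and gk: "g \<otimes>\<^bsub>G\<^esub> k = x"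
    using g x by (simp_all add: k_def G.m_assoc[symmetric])
  have "h k \<otimes>\<^bsub>R\<^esub> ideal_one (inv\<^bsub>G\<^esub> g) \<in> D (inv\<^bsub>G\<^esub> g)"
    using g' ideal_one_closed[OF g'] skew_carrier_value[OF h] by (rule D_l_closed)
  moreover have "h k \<otimes>\<^bsub>R\<^esub> ideal_one (inv\<^bsub>G\<^esub> g) \<in> D k"
    using k skew_carrier_D[OF h k] ideal_one_carrier[OF g'] by (rule D_r_closed)
  ultimately have "\<alpha> g (h k \<otimes>\<^bsub>R\<^esub> ideal_one (inv\<^bsub>G\<^esub> g)) \<in> D x"
    using alpha_closed_Int[OF g k] gk by simp
  then show ?thesis
    unfolding skew_term_def k_def[symmetric] by (rule D_l_closed[OF x _ skew_carrier_value[OF f]])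
qed

lemma skew_term_eq_zero:
  assumes f: "f \<in> carrier S" and g: "g \<in> carrier G" and "h (inv\<^bsub>G\<^esub> g \<otimes>\<^bsub>G\<^esub> x) = \<zero>\<^bsub>R\<^esub>"
  shows "skew_term f h x g = \<zero>\<^bsub>R\<^esub>"
  using assms alpha_zero[OF g] ideal_one_carrier[of "inv\<^bsub>G\<^esub> g"] skew_carrier_value[OF f]
  by (simp add: skew_term_def)

lemma skew_mult_closed_D:
  assumes f: "f \<in> carrier S" and h: "h \<in> carrier S" and x: "x \<in> carrier G"
  shows "(f \<otimes>\<^bsub>S\<^esub> h) x \<in> D x"
  unfolding skew_mult_apply[OF x]
proof (rule R.finsum_mem[OF skew_carrier_finite[OF f] _ D_subset[OF x] D_zero_closed[OF x]])
  show "skew_term f h x \<in> supp f \<rightarrow> D x"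
    using skew_term_closed_target[OF f h _ x] skew_support_subset by blast
qed (rule D_a_closed[OF x])

lemma skew_support_mult:
  assumes f: "f \<in> carrier S" and h: "h \<in> carrier S"
  shows "supp (f \<otimes>\<^bsub>S\<^esub> h) \<subseteq> supp f <#>\<^bsub>G\<^esub> supp h"
proof
  fix x assume x: "x \<in> supp (f \<otimes>\<^bsub>S\<^esub> h)"
  then have x_G: "x \<in> carrier G" by (simp add: mem_skew_support)
  show "x \<in> supp f <#>\<^bsub>G\<^esub> supp h"
  proof (rule ccontr)
    assume not_prod: "x \<notin> supp f <#>\<^bsub>G\<^esub> supp h"
    have "skew_term f h x g = \<zero>\<^bsub>R\<^esub>" if g: "g \<in> supp f" for g
    proof (rule skew_term_eq_zero[OF f])
      show g_G: "g \<in> carrier G" using g by (simp add: mem_skew_support)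
      have "g \<otimes>\<^bsub>G\<^esub> (inv\<^bsub>G\<^esub> g \<otimes>\<^bsub>G\<^esub> x) = x"
        using g_G x_G by (simp add: G.m_assoc[symmetric])
      then have "inv\<^bsub>G\<^esub> g \<otimes>\<^bsub>G\<^esub> x \<notin> supp h"
        using not_prod g unfolding set_mult_def by blast
      then show "h (inv\<^bsub>G\<^esub> g \<otimes>\<^bsub>G\<^esub> x) = \<zero>\<^bsub>R\<^esub>"
        using g_G x_G by (simp add: mem_skew_support)
    qed
    then have "(f \<otimes>\<^bsub>S\<^esub> h) x = \<zero>\<^bsub>R\<^esub>"
      unfolding skew_mult_apply[OF x_G] by (simp add: R.add.finprod_one_eqI)
    then show False using x by (simp add: mem_skew_support)
  qed
qed

lemma skew_mult_closed:
  assumes f: "f \<in> carrier S" and h: "h \<in> carrier S"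
  shows "f \<otimes>\<^bsub>S\<^esub> h \<in> carrier S"
proof -
  have "finite (supp f <#>\<^bsub>G\<^esub> supp h)"
    using skew_carrier_finite[OF f] skew_carrier_finite[OF h] by (simp add: set_mult_def)
  then have "finite (supp (f \<otimes>\<^bsub>S\<^esub> h))"
    using skew_support_mult[OF f h] by (rule finite_subset[rotated])
  then show ?thesis
    unfolding carrier_skew_iff using skew_mult_outside skew_mult_closed_D[OF f h] by blast
qed

definition delta_one :: "'r \<Rightarrow> 'g \<Rightarrow> 'r" where
  "delta_one r = (\<lambda>x. if x = \<one>\<^bsub>G\<^esub> then r else \<zero>\<^bsub>R\<^esub>)"

lemma skew_one: "\<one>\<^bsub>S\<^esub> = delta_one \<one>\<^bsub>R\<^esub>"
  by (simp add: partial_skew_group_ring_def delta_one_def)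

lemma skew_support_delta_one: "supp (delta_one r) \<subseteq> {\<one>\<^bsub>G\<^esub>}"
  by (auto simp: skew_support_def delta_one_def)

lemma delta_one_closed: "r \<in> carrier R \<Longrightarrow> delta_one r \<in> carrier S"
  using skew_support_delta_one[of r] finite_subset D_one D_zero_closed
  by (auto simp: carrier_skew_iff delta_one_def)

lemma delta_one_mult_apply:
  assumes r: "r \<in> carrier R" and y: "y \<in> carrier S"
  shows "(delta_one r \<otimes>\<^bsub>S\<^esub> y) z = r \<otimes>\<^bsub>R\<^esub> y z"
proof (cases "z \<in> carrier G")
  case True
  have "(delta_one r \<otimes>\<^bsub>S\<^esub> y) z =
      (if \<one>\<^bsub>G\<^esub> \<in> supp (delta_one r) then skew_term (delta_one r) y z \<one>\<^bsub>G\<^esub> else \<zero>\<^bsub>R\<^esub>)"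
    unfolding skew_mult_apply[OF True]
  proof (rule R.finsum_eq_single[OF skew_carrier_finite[OF delta_one_closed[OF r]]])
    show "skew_term (delta_one r) y z \<in> supp (delta_one r) \<rightarrow> carrier R"
      using skew_term_closed_target[OF delta_one_closed[OF r] y _ True] skew_support_subset
        D_subset[OF True] by blast
  qed (use skew_support_delta_one in blast)
  also have "\<dots> = r \<otimes>\<^bsub>R\<^esub> y z"
    using True skew_carrier_value[OF y] r alpha_one ideal_one_one
    by (auto simp: skew_term_def delta_one_def mem_skew_support)
  finally show ?thesis .
qed (simp add: skew_mult_outside skew_carrier_outside[OF y] r)

lemma delta_one_mult:
  assumes "r \<in> carrier R" and "r' \<in> carrier R"
  shows "delta_one r \<otimes>\<^bsub>S\<^esub> delta_one r' = delta_one (r \<otimes>\<^bsub>R\<^esub> r')"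
  using assms delta_one_mult_apply[OF assms(1) delta_one_closed[OF assms(2)]]
  by (auto simp: delta_one_def)

lemma delta_one_add: "delta_one r \<oplus>\<^bsub>S\<^esub> delta_one r' = delta_one (r \<oplus>\<^bsub>R\<^esub> r')"
  by (auto simp: delta_one_def skew_add)

lemma delta_one_zero: "delta_one \<zero>\<^bsub>R\<^esub> = \<zero>\<^bsub>S\<^esub>"
  by (auto simp: delta_one_def skew_zero)

lemma skew_one_left:
  assumes y: "y \<in> carrier S"
  shows "\<one>\<^bsub>S\<^esub> \<otimes>\<^bsub>S\<^esub> y = y"
  unfolding skew_one using delta_one_mult_apply[OF R.one_closed y] skew_carrier_value[OF y]
  by (simp add: fun_eq_iff)

lemma skew_one_right:
  assumes y: "y \<in> carrier S"
  shows "y \<otimes>\<^bsub>S\<^esub> \<one>\<^bsub>S\<^esub> = y"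
proof
  fix z show "(y \<otimes>\<^bsub>S\<^esub> \<one>\<^bsub>S\<^esub>) z = y z"
  proof (cases "z \<in> carrier G")
    case z: True
    have z': "inv\<^bsub>G\<^esub> z \<in> carrier G" using z by simp
    have "(y \<otimes>\<^bsub>S\<^esub> \<one>\<^bsub>S\<^esub>) z = (if z \<in> supp y then skew_term y \<one>\<^bsub>S\<^esub> z z else \<zero>\<^bsub>R\<^esub>)"
      unfolding skew_mult_apply[OF z]
    proof (rule R.finsum_eq_single[OF skew_carrier_finite[OF y]])
      show "skew_term y \<one>\<^bsub>S\<^esub> z \<in> supp y \<rightarrow> carrier R"
        using skew_term_closed_target[OF y delta_one_closed[OF R.one_closed] _ z]
          skew_support_subset D_subset[OF z] by (force simp: skew_one)
      fix g assume g: "g \<in> supp y" "g \<noteq> z"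
      then have "g \<in> carrier G" by (simp add: mem_skew_support)
      moreover have "inv\<^bsub>G\<^esub> g \<otimes>\<^bsub>G\<^esub> z \<noteq> \<one>\<^bsub>G\<^esub>"
        using g z \<open>g \<in> carrier G\<close> G.inv_comm G.inv_equality by fastforce
      ultimately show "skew_term y \<one>\<^bsub>S\<^esub> z g = \<zero>\<^bsub>R\<^esub>"
        by (intro skew_term_eq_zero[OF y]) (simp_all add: skew_one delta_one_def)
    qed
    also have "\<dots> = y z"
      using z z' skew_carrier_D[OF y z] ideal_one_carrier[OF z'] alpha_ideal_one[OF z] ideal_one_r[OF z]
      by (auto simp: skew_term_def skew_one delta_one_def mem_skew_support)
    finally show ?thesis .
  qed (simp add: skew_mult_outside skew_carrier_outside[OF y])
qed

lemma skew_pointwise_neg: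
  assumes x: "x \<in> carrier S"
  shows "(\<lambda>g. \<ominus>\<^bsub>R\<^esub> x g) \<in> carrier S" and "(\<lambda>g. \<ominus>\<^bsub>R\<^esub> x g) \<oplus>\<^bsub>S\<^esub> x = \<zero>\<^bsub>S\<^esub>"
proof -
  have "supp (\<lambda>g. \<ominus>\<^bsub>R\<^esub> x g) = supp x"
    using skew_carrier_value[OF x] by (auto simp: mem_skew_support)
  then show "(\<lambda>g. \<ominus>\<^bsub>R\<^esub> x g) \<in> carrier S"
    using x D_a_inv_closed by (simp add: carrier_skew_iff)
  show "(\<lambda>g. \<ominus>\<^bsub>R\<^esub> x g) \<oplus>\<^bsub>S\<^esub> x = \<zero>\<^bsub>S\<^esub>"
    using skew_carrier_value[OF x] by (simp add: skew_add skew_zero R.l_neg)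
qed

lemma skew_abelian_group: "abelian_group S"
proof (rule abelian_groupI)
  fix x y assume x: "x \<in> carrier S" and y: "y \<in> carrier S"
  have "supp (x \<oplus>\<^bsub>S\<^esub> y) \<subseteq> supp x \<union> supp y"
    by (auto simp: mem_skew_support skew_add)
  then show "x \<oplus>\<^bsub>S\<^esub> y \<in> carrier S"
    using x y D_a_closed finite_subset by (simp add: carrier_skew_iff skew_add) blast
  show "x \<oplus>\<^bsub>S\<^esub> y = y \<oplus>\<^bsub>S\<^esub> x"
    using skew_carrier_value[OF x] skew_carrier_value[OF y] by (simp add: skew_add R.a_comm)
  show "\<exists>z\<in>carrier S. z \<oplus>\<^bsub>S\<^esub> x = \<zero>\<^bsub>S\<^esub>"
    using skew_pointwise_neg[OF x] by blast
next
  fix x y z assume "x \<in> carrier S" and "y \<in> carrier S" and "z \<in> carrier S"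
  then show "x \<oplus>\<^bsub>S\<^esub> y \<oplus>\<^bsub>S\<^esub> z = x \<oplus>\<^bsub>S\<^esub> (y \<oplus>\<^bsub>S\<^esub> z)"
    using skew_carrier_value by (simp add: skew_add R.a_assoc)
next
  show "\<zero>\<^bsub>S\<^esub> \<in> carrier S"
    using D_zero_closed by (simp add: carrier_skew_iff skew_zero skew_support_def)
next
  fix x assume "x \<in> carrier S"
  then show "\<zero>\<^bsub>S\<^esub> \<oplus>\<^bsub>S\<^esub> x = x"
    using skew_carrier_value by (simp add: skew_add skew_zero)
qed

sublocale S: abelian_group S
  by (rule skew_abelian_group)

lemma skew_minus: "x \<in> carrier S \<Longrightarrow> \<ominus>\<^bsub>S\<^esub> x = (\<lambda>g. \<ominus>\<^bsub>R\<^esub> x g)"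
  using skew_pointwise_neg by (intro S.minus_equality) auto

lemma skew_finsum_apply:
  assumes "finite A" and "F \<in> A \<rightarrow> carrier S"
  shows "(\<Oplus>\<^bsub>S\<^esub> i\<in>A. F i) g = (\<Oplus>\<^bsub>R\<^esub> i\<in>A. F i g)"
  using assms
proof (induction A rule: finite_induct)
  case (insert a A)
  then have "(\<lambda>i. F i g) \<in> A \<rightarrow> carrier R" using skew_carrier_value by blast
  with insert show ?case using skew_carrier_value by (simp add: S.finsum_insert R.finsum_insert skew_add)
qed (simp add: skew_zero)

end

section \<open>The grading by a quotient group\<close>

locale unital_partial_action_quotient = unital_partial_action_ring +
  fixes N
  assumes normal: "N \<lhd> G"
begin

abbreviation Q where
  "Q \<equiv> G Mod N"

abbreviation T where
  "T \<equiv> induced_quotient_component R G D \<alpha>"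

lemma subgroup_N: "subgroup N G"
  using normal by (rule normal_imp_subgroup)

lemma quotient_group: "group Q"
  using normal by (rule normal.factorgroup_is_group)

lemma rcos_in_quotient: "g \<in> carrier G \<Longrightarrow> N #>\<^bsub>G\<^esub> g \<in> carrier Q"
  by (simp add: carrier_FactGroup)

lemma coset_eq_rcos:
  assumes "C \<in> carrier Q" and "g \<in> C"
  shows "C = N #>\<^bsub>G\<^esub> g"
proof -
  obtain a where "a \<in> carrier G" and "C = N #>\<^bsub>G\<^esub> a"
    using assms(1) by (auto simp: carrier_FactGroup)
  then show ?thesis using G.repr_independence assms(2) subgroup_N by blast
qed

lemma coset_subset: "C \<in> carrier Q \<Longrightarrow> C \<subseteq> carrier G"
  using G.r_coset_subset_G subgroup.subset[OF subgroup_N] by (auto simp: carrier_FactGroup)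

lemma mem_nontrivial_coset: "C \<in> carrier Q \<Longrightarrow> C \<noteq> N \<Longrightarrow> g \<in> C \<Longrightarrow> g \<noteq> \<one>\<^bsub>G\<^esub>"
  using coset_eq_rcos G.coset_mult_one subgroup.subset[OF subgroup_N] by fastforce

lemma inv_mem_inv_coset: "C \<in> carrier Q \<Longrightarrow> g \<in> C \<Longrightarrow> inv\<^bsub>G\<^esub> g \<in> inv\<^bsub>Q\<^esub> C"
  by (auto simp: normal.inv_FactGroup[OF normal] SET_INV_def)

lemma mem_component_iff: "f \<in> T C \<longleftrightarrow> f \<in> carrier S \<and> supp f \<subseteq> C"
  by (simp add: induced_quotient_component_def)

lemma component_apply_outside:
  assumes "f \<in> T C" and "g \<notin> C"
  shows "f g = \<zero>\<^bsub>R\<^esub>"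
proof (cases "g \<in> carrier G")
  case True
  then show ?thesis
    using assms subsetD[of "supp f" C g] by (auto simp: mem_component_iff mem_skew_support)
qed (use assms skew_carrier_outside in \<open>auto simp: mem_component_iff\<close>)

lemma component_zero: "\<zero>\<^bsub>S\<^esub> \<in> T C"
  using S.zero_closed by (simp add: mem_component_iff skew_zero skew_support_def)

lemma component_add:
  assumes "x \<in> T C" and "y \<in> T C"
  shows "x \<oplus>\<^bsub>S\<^esub> y \<in> T C"
proof -
  have "supp (x \<oplus>\<^bsub>S\<^esub> y) \<subseteq> supp x \<union> supp y"
    by (auto simp: mem_skew_support skew_add)
  then show ?thesis using assms S.a_closed unfolding mem_component_iff by blast
qed

lemma component_minus:
  assumes "x \<in> T C"
  shows "\<ominus>\<^bsub>S\<^esub> x \<in> T C"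
proof -
  have "x \<in> carrier S" using assms by (simp add: mem_component_iff)
  then have "supp (\<ominus>\<^bsub>S\<^esub> x) = supp x"
    using skew_carrier_value by (auto simp: mem_skew_support skew_minus)
  then show ?thesis using assms S.a_inv_closed unfolding mem_component_iff by simp
qed

lemma component_mult:
  assumes x: "x \<in> T C" and y: "y \<in> T C'"
  shows "x \<otimes>\<^bsub>S\<^esub> y \<in> T (C <#>\<^bsub>G\<^esub> C')"
proof -
  have "supp x <#>\<^bsub>G\<^esub> supp y \<subseteq> C <#>\<^bsub>G\<^esub> C'"
    using x y unfolding mem_component_iff set_mult_def by blast
  then show ?thesis
    using x y skew_mult_closed skew_support_mult unfolding mem_component_iff by blast
qed

lemma skew_one_component: "\<one>\<^bsub>S\<^esub> \<in> T N"
  using skew_support_delta_one delta_one_closed subgroup.one_closed[OF subgroup_N]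
  by (auto simp: mem_component_iff skew_one)

lemma skew_one_is_mult_identity: "is_mult_identity S (sum_prods S (T N) (T N)) \<one>\<^bsub>S\<^esub>"
  unfolding is_mult_identity_def
proof (intro conjI ballI)
  have "\<one>\<^bsub>S\<^esub> \<otimes>\<^bsub>S\<^esub> \<one>\<^bsub>S\<^esub> \<in> sum_prods S (T N) (T N)"
    using skew_one_component skew_one_component by (rule sum_prods.sp_prod)
  then show "\<one>\<^bsub>S\<^esub> \<in> sum_prods S (T N) (T N)"
    using skew_one_left skew_one_component by (simp add: mem_component_iff)
  fix p assume "p \<in> sum_prods S (T N) (T N)"
  moreover have "sum_prods S (T N) (T N) \<subseteq> carrier S"
    using skew_mult_closed by (intro sum_prods_subset) (auto simp: mem_component_iff)
  ultimately have "p \<in> carrier S" by blast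
  then show "\<one>\<^bsub>S\<^esub> \<otimes>\<^bsub>S\<^esub> p = p" and "p \<otimes>\<^bsub>S\<^esub> \<one>\<^bsub>S\<^esub> = p"
    by (simp_all add: skew_one_left skew_one_right)
qed

definition homogeneous_component where
  "homogeneous_component s C =
     (if C \<in> carrier Q then (\<lambda>g. if g \<in> C then s g else \<zero>\<^bsub>R\<^esub>) else \<zero>\<^bsub>S\<^esub>)"

lemma homogeneous_component_mem:
  assumes s: "s \<in> carrier S" and C: "C \<in> carrier Q"
  shows "homogeneous_component s C \<in> T C"
proof -
  have "supp (homogeneous_component s C) \<subseteq> supp s" and "supp (homogeneous_component s C) \<subseteq> C"
    using C by (auto simp: mem_skew_support homogeneous_component_def split: if_splits)
  then show ?thesis
    using s C coset_subset[OF C] D_zero_closed finite_subset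
    by (auto simp: mem_component_iff carrier_skew_iff homogeneous_component_def)
qed

lemma finsum_components_apply:
  assumes A: "finite A" "A \<subseteq> carrier Q"
    and y: "\<And>C. C \<in> carrier Q \<Longrightarrow> y C \<in> T C" "\<And>C. C \<in> carrier Q - A \<Longrightarrow> y C = \<zero>\<^bsub>S\<^esub>"
    and C: "C \<in> carrier Q" and g: "g \<in> C"
  shows "(\<Oplus>\<^bsub>S\<^esub> C'\<in>A. y C') g = y C g"
proof -
  have y_carrier: "y \<in> A \<rightarrow> carrier S"
    using A(2) y(1) by (auto simp: mem_component_iff)
  have "(\<Oplus>\<^bsub>S\<^esub> C'\<in>A. y C') g = (\<Oplus>\<^bsub>R\<^esub> C'\<in>A. y C' g)"
    using A(1) y_carrier by (rule skew_finsum_apply)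
  also have "\<dots> = (if C \<in> A then y C g else \<zero>\<^bsub>R\<^esub>)"
  proof (rule R.finsum_eq_single[OF A(1)])
    show "(\<lambda>C'. y C' g) \<in> A \<rightarrow> carrier R"
      using y_carrier skew_carrier_value by blast
    fix C' assume C': "C' \<in> A" "C' \<noteq> C"
    then have "g \<notin> C'"
      using A(2) coset_eq_rcos C g by blast
    then show "y C' g = \<zero>\<^bsub>R\<^esub>"
      using C' A(2) y(1) component_apply_outside by blast
  qed
  also have "\<dots> = y C g"
    using C y(2) by (auto simp: skew_zero)
  finally show ?thesis .
qed

lemma finite_homogeneous_support:
  assumes s: "s \<in> carrier S"
  shows "finite {C \<in> carrier Q. homogeneous_component s C \<noteq> \<zero>\<^bsub>S\<^esub>}"
proof (rule finite_subset)
  show "finite ((\<lambda>g. N #>\<^bsub>G\<^esub> g) ` supp s)" using skew_carrier_finite[OF s] by simp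
  show "{C \<in> carrier Q. homogeneous_component s C \<noteq> \<zero>\<^bsub>S\<^esub>} \<subseteq> (\<lambda>g. N #>\<^bsub>G\<^esub> g) ` supp s"
  proof
    fix C assume "C \<in> {C \<in> carrier Q. homogeneous_component s C \<noteq> \<zero>\<^bsub>S\<^esub>}"
    then obtain g where C: "C \<in> carrier Q" and g: "g \<in> C" "s g \<noteq> \<zero>\<^bsub>R\<^esub>"
      by (auto simp: homogeneous_component_def skew_zero fun_eq_iff split: if_splits)
    then have "g \<in> supp s" using coset_subset by (auto simp: mem_skew_support)
    then show "C \<in> (\<lambda>g. N #>\<^bsub>G\<^esub> g) ` supp s" using coset_eq_rcos[OF C g(1)] by blast
  qed
qed

lemma finsum_homogeneous_components:
  assumes s: "s \<in> carrier S"
  shows "s = (\<Oplus>\<^bsub>S\<^esub> C\<in>{C \<in> carrier Q. homogeneous_component s C \<noteq> \<zero>\<^bsub>S\<^esub>}. homogeneous_component s C)"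
    (is "_ = finsum S _ ?A")
proof
  fix g
  show "s g = finsum S (homogeneous_component s) ?A g"
  proof (cases "g \<in> carrier G")
    case True
    have "finsum S (homogeneous_component s) ?A g = homogeneous_component s (N #>\<^bsub>G\<^esub> g) g"
      using finite_homogeneous_support[OF s] homogeneous_component_mem[OF s]
        rcos_in_quotient[OF True] G.rcos_self[OF True subgroup_N]
      by (intro finsum_components_apply) (auto simp: homogeneous_component_def)
    then show ?thesis
      using rcos_in_quotient[OF True] G.rcos_self[OF True subgroup_N]
      by (simp add: homogeneous_component_def)
  next
    case False
    have "finsum S (homogeneous_component s) ?A \<in> carrier S"
      using homogeneous_component_mem[OF s] by (intro S.finsum_closed) (auto simp: mem_component_iff)
    then have "finsum S (homogeneous_component s) ?A g = \<zero>\<^bsub>R\<^esub>"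
      using False by (rule skew_carrier_outside)
    then show ?thesis using skew_carrier_outside[OF s False] by simp
  qed
qed

lemma homogeneous_components_unique:
  assumes y: "\<forall>C. C \<notin> carrier Q \<longrightarrow> y C = \<zero>\<^bsub>S\<^esub>" "\<forall>C\<in>carrier Q. y C \<in> T C"
    and fin: "finite {C \<in> carrier Q. y C \<noteq> \<zero>\<^bsub>S\<^esub>}"
  shows "y = homogeneous_component (\<Oplus>\<^bsub>S\<^esub> C\<in>{C \<in> carrier Q. y C \<noteq> \<zero>\<^bsub>S\<^esub>}. y C)"
    (is "_ = homogeneous_component ?s")
proof
  fix C
  show "y C = homogeneous_component ?s C"
  proof (cases "C \<in> carrier Q")
    case C: True
    show ?thesis
    proof
      fix g
      show "y C g = homogeneous_component ?s C g"
      proof (cases "g \<in> C")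
        case True
        then have "?s g = y C g"
          using fin y C by (intro finsum_components_apply) auto
        then show ?thesis using C True by (simp add: homogeneous_component_def)
      next
        case False
        then have "y C g = \<zero>\<^bsub>R\<^esub>"
          using C y(2) by (intro component_apply_outside) auto
        then show ?thesis using C False by (simp add: homogeneous_component_def)
      qed
    qed
  qed (use y in \<open>simp add: homogeneous_component_def\<close>)
qed

lemma component_grading: "is_grading S Q T"
  unfolding is_grading_def
proof (intro conjI ballI)
  fix C
  show "T C \<subseteq> carrier S" by (auto simp: mem_component_iff)
  show "\<zero>\<^bsub>S\<^esub> \<in> T C" by (rule component_zero)
  fix x y assume "x \<in> T C" and "y \<in> T C"
  then show "x \<oplus>\<^bsub>S\<^esub> y \<in> T C" and "\<ominus>\<^bsub>S\<^esub> x \<in> T C"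
    by (simp_all add: component_add component_minus)
next
  fix C C' x y assume "x \<in> T C" and "y \<in> T C'"
  then show "x \<otimes>\<^bsub>S\<^esub> y \<in> T (C \<otimes>\<^bsub>Q\<^esub> C')" by (simp add: component_mult)
next
  fix s assume s: "s \<in> carrier S"
  show "\<exists>!y. (\<forall>C. C \<notin> carrier Q \<longrightarrow> y C = \<zero>\<^bsub>S\<^esub>) \<and> (\<forall>C\<in>carrier Q. y C \<in> T C) \<and>
        finite {C \<in> carrier Q. y C \<noteq> \<zero>\<^bsub>S\<^esub>} \<and>
        s = (\<Oplus>\<^bsub>S\<^esub> C\<in>{C \<in> carrier Q. y C \<noteq> \<zero>\<^bsub>S\<^esub>}. y C)"
  proof (rule ex1I[of _ "homogeneous_component s"], intro conjI)
    show "\<forall>C. C \<notin> carrier Q \<longrightarrow> homogeneous_component s C = \<zero>\<^bsub>S\<^esub>"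
      by (simp add: homogeneous_component_def)
  qed (use s homogeneous_component_mem finite_homogeneous_support finsum_homogeneous_components
         homogeneous_components_unique in blast)+
qed

end

section \<open>Orthogonal partial actions\<close>

locale orthogonal_partial_action = unital_partial_action_ring +
  assumes orthogonal: "\<forall>g\<in>carrier G. \<forall>h\<in>carrier G. g \<noteq> h \<and> g \<noteq> \<one>\<^bsub>G\<^esub> \<and> h \<noteq> \<one>\<^bsub>G\<^esub>
           \<longrightarrow> sum_prods R (D g) (D h) = {\<zero>\<^bsub>R\<^esub>}"
    and finite_ideal_ones: "finite (unit_of_ideal R D ` carrier G)"
begin

lemma orthogonal_mult:
  assumes "g \<in> carrier G" "h \<in> carrier G" "g \<noteq> h" "g \<noteq> \<one>\<^bsub>G\<^esub>" "h \<noteq> \<one>\<^bsub>G\<^esub>"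
    and "a \<in> D g" "b \<in> D h"
  shows "a \<otimes>\<^bsub>R\<^esub> b = \<zero>\<^bsub>R\<^esub>"
proof -
  have "a \<otimes>\<^bsub>R\<^esub> b \<in> sum_prods R (D g) (D h)"
    using assms(6,7) by (rule sum_prods.sp_prod)
  then show ?thesis using orthogonal assms(1-5) by blast
qed

lemma finite_nontrivial_ideal_ones:
  "finite {g \<in> carrier G. g \<noteq> \<one>\<^bsub>G\<^esub> \<and> ideal_one g \<noteq> \<zero>\<^bsub>R\<^esub>}" (is "finite ?U")
proof (rule finite_imageD)
  show "finite (ideal_one ` ?U)"
    using finite_ideal_ones by (rule finite_subset[rotated]) blast
  show "inj_on ideal_one ?U"
  proof
    fix g h assume g: "g \<in> ?U" and h: "h \<in> ?U" and eq: "ideal_one g = ideal_one h"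
    show "g = h"
    proof (rule ccontr)
      assume "g \<noteq> h"
      then have "ideal_one g \<otimes>\<^bsub>R\<^esub> ideal_one h = \<zero>\<^bsub>R\<^esub>"
        using g h ideal_one_closed by (intro orthogonal_mult) auto
      moreover have "ideal_one g \<otimes>\<^bsub>R\<^esub> ideal_one h = ideal_one h"
        unfolding eq using h ideal_one_closed ideal_one_r by simp
      ultimately show False using h by simp
    qed
  qed
qed

end

locale orthogonal_partial_action_quotient =
  unital_partial_action_quotient + orthogonal_partial_action
begin

text \<open>
  These are s(C) and \<epsilon>(C). Summing over the support keeps the index set finite;
  a finite sum over an infinite set would just be zero.
\<close>

definition coset_section where
  "coset_section C = (\<lambda>g. if g \<in> C then ideal_one g else \<zero>\<^bsub>R\<^esub>)"

definition coset_unit where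
  "coset_unit C = (\<Oplus>\<^bsub>R\<^esub> g\<in>supp (coset_section C). ideal_one g)"

definition coset_corner where
  "coset_corner C = {r \<in> carrier R. coset_unit C \<otimes>\<^bsub>R\<^esub> r = r \<and> r \<otimes>\<^bsub>R\<^esub> coset_unit C = r}"

lemma supp_coset_section: "supp (coset_section C) \<subseteq> C"
  by (auto simp: mem_skew_support coset_section_def split: if_splits)

lemma coset_unit_closed: "coset_unit C \<in> carrier R"
  unfolding coset_unit_def
  using ideal_one_carrier skew_support_subset by (intro R.finsum_closed) blast

lemma coset_corner_zero: "\<zero>\<^bsub>R\<^esub> \<in> coset_corner C"
  using coset_unit_closed by (simp add: coset_corner_def)

lemma coset_corner_add:
  "r \<in> coset_corner C \<Longrightarrow> r' \<in> coset_corner C \<Longrightarrow> r \<oplus>\<^bsub>R\<^esub> r' \<in> coset_corner C"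
  using coset_unit_closed by (simp add: coset_corner_def R.r_distr R.l_distr)

context
  fixes C assumes C: "C \<in> carrier Q" and C_nontrivial: "C \<noteq> N"
begin

lemma inv_coset: "inv\<^bsub>Q\<^esub> C \<in> carrier Q" "inv\<^bsub>Q\<^esub> C \<noteq> N"
  using group.inv_closed[OF quotient_group C] group.inv_eq_1_iff[OF quotient_group C]
    C_nontrivial by simp_all

lemma finite_supp_coset_section: "finite (supp (coset_section C))"
proof (rule finite_subset[OF _ finite_nontrivial_ideal_ones])
  show "supp (coset_section C) \<subseteq> {g \<in> carrier G. g \<noteq> \<one>\<^bsub>G\<^esub> \<and> ideal_one g \<noteq> \<zero>\<^bsub>R\<^esub>}"
  proof
    fix g assume g: "g \<in> supp (coset_section C)"
    then have "g \<in> C" using supp_coset_section by blast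
    then show "g \<in> {g \<in> carrier G. g \<noteq> \<one>\<^bsub>G\<^esub> \<and> ideal_one g \<noteq> \<zero>\<^bsub>R\<^esub>}"
      using g mem_nontrivial_coset[OF C C_nontrivial] by (auto simp: mem_skew_support coset_section_def)
  qed
qed

lemma coset_section_component: "coset_section C \<in> T C"
  using supp_coset_section finite_supp_coset_section coset_subset[OF C] ideal_one_closed D_zero_closed
  by (auto simp: mem_component_iff carrier_skew_iff coset_section_def)

lemma D_subset_coset_corner:
  assumes g: "g \<in> C"
  shows "D g \<subseteq> coset_corner C"
proof
  fix y assume y: "y \<in> D g"
  let ?U = "supp (coset_section C)"
  have g_G: "g \<in> carrier G" using g coset_subset[OF C] by blast
  have y_R: "y \<in> carrier R" using y D_subset[OF g_G] by blast
  have ones: "ideal_one \<in> ?U \<rightarrow> carrier R"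
    using ideal_one_carrier skew_support_subset by blast
  have orth: "ideal_one h \<otimes>\<^bsub>R\<^esub> y = \<zero>\<^bsub>R\<^esub>" "y \<otimes>\<^bsub>R\<^esub> ideal_one h = \<zero>\<^bsub>R\<^esub>"
    if "h \<in> ?U" and "h \<noteq> g" for h
  proof -
    have "h \<in> C" and "h \<in> carrier G"
      using that supp_coset_section skew_support_subset by blast+
    then show "ideal_one h \<otimes>\<^bsub>R\<^esub> y = \<zero>\<^bsub>R\<^esub>" "y \<otimes>\<^bsub>R\<^esub> ideal_one h = \<zero>\<^bsub>R\<^esub>"
      using that(2) g g_G y ideal_one_closed mem_nontrivial_coset[OF C C_nontrivial]
      by (auto intro: orthogonal_mult)
  qed
  have "coset_unit C \<otimes>\<^bsub>R\<^esub> y = (\<Oplus>\<^bsub>R\<^esub> h\<in>?U. ideal_one h \<otimes>\<^bsub>R\<^esub> y)"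
    unfolding coset_unit_def using finite_supp_coset_section y_R ones by (rule R.finsum_ldistr)
  also have "\<dots> = (if g \<in> ?U then ideal_one g \<otimes>\<^bsub>R\<^esub> y else \<zero>\<^bsub>R\<^esub>)"
    using ones y_R orth(1) by (intro R.finsum_eq_single[OF finite_supp_coset_section]) auto
  also have "\<dots> = y"
    using g g_G y y_R ideal_one_l[OF g_G y] by (auto simp: mem_skew_support coset_section_def)
  finally have left: "coset_unit C \<otimes>\<^bsub>R\<^esub> y = y" .
  have "y \<otimes>\<^bsub>R\<^esub> coset_unit C = (\<Oplus>\<^bsub>R\<^esub> h\<in>?U. y \<otimes>\<^bsub>R\<^esub> ideal_one h)"
    unfolding coset_unit_def using finite_supp_coset_section y_R ones by (rule R.finsum_rdistr)
  also have "\<dots> = (if g \<in> ?U then y \<otimes>\<^bsub>R\<^esub> ideal_one g else \<zero>\<^bsub>R\<^esub>)"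
    using ones y_R orth(2) by (intro R.finsum_eq_single[OF finite_supp_coset_section]) auto
  also have "\<dots> = y"
    using g g_G y y_R ideal_one_r[OF g_G y] by (auto simp: mem_skew_support coset_section_def)
  finally show "y \<in> coset_corner C"
    using left y_R by (simp add: coset_corner_def)
qed

text \<open>
  For x \<noteq> 1 the indices g\<inverse> and g\<inverse>x are distinct elements of C\<inverse>, so neither is 1
  and orthogonality applies.
\<close>

lemma skew_term_inv_coset_zero:
  assumes a: "a \<in> T C" and b: "b \<in> T (inv\<^bsub>Q\<^esub> C)" and g: "g \<in> supp a"
    and x: "x \<in> carrier G" "x \<noteq> \<one>\<^bsub>G\<^esub>"
  shows "skew_term a b x g = \<zero>\<^bsub>R\<^esub>"
proof -
  have a_S: "a \<in> carrier S" and b_S: "b \<in> carrier S" using a b by (simp_all add: mem_component_iff)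
  have g_C: "g \<in> C" and g_G: "g \<in> carrier G"
    using g a skew_support_subset by (auto simp: mem_component_iff)
  have g': "inv\<^bsub>G\<^esub> g \<in> carrier G" and k: "inv\<^bsub>G\<^esub> g \<otimes>\<^bsub>G\<^esub> x \<in> carrier G" using g_G x by simp_all
  show ?thesis
  proof (cases "inv\<^bsub>G\<^esub> g \<otimes>\<^bsub>G\<^esub> x \<in> inv\<^bsub>Q\<^esub> C")
    case True
    have "inv\<^bsub>G\<^esub> g \<in> inv\<^bsub>Q\<^esub> C" using inv_mem_inv_coset[OF C g_C] .
    moreover have "inv\<^bsub>G\<^esub> g \<otimes>\<^bsub>G\<^esub> x \<noteq> inv\<^bsub>G\<^esub> g" using g' x by (simp add: G.l_cancel_one')
    ultimately have "b (inv\<^bsub>G\<^esub> g \<otimes>\<^bsub>G\<^esub> x) \<otimes>\<^bsub>R\<^esub> ideal_one (inv\<^bsub>G\<^esub> g) = \<zero>\<^bsub>R\<^esub>"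
      using True k g' skew_carrier_D[OF b_S k] ideal_one_closed[OF g']
        mem_nontrivial_coset[OF inv_coset] by (intro orthogonal_mult) auto
    then show ?thesis
      using alpha_zero[OF g_G] skew_carrier_value[OF a_S] by (simp add: skew_term_def)
  next
    case False
    then show ?thesis
      using b component_apply_outside skew_term_eq_zero[OF a_S g_G] by blast
  qed
qed

lemma component_mult_inv_coset:
  assumes a: "a \<in> T C" and b: "b \<in> T (inv\<^bsub>Q\<^esub> C)"
  shows "a \<otimes>\<^bsub>S\<^esub> b = delta_one ((a \<otimes>\<^bsub>S\<^esub> b) \<one>\<^bsub>G\<^esub>)"
proof
  fix x
  show "(a \<otimes>\<^bsub>S\<^esub> b) x = delta_one ((a \<otimes>\<^bsub>S\<^esub> b) \<one>\<^bsub>G\<^esub>) x"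
  proof (cases "x \<in> carrier G \<and> x \<noteq> \<one>\<^bsub>G\<^esub>")
    case True
    then have "(a \<otimes>\<^bsub>S\<^esub> b) x = (\<Oplus>\<^bsub>R\<^esub> g\<in>supp a. skew_term a b x g)"
      by (simp add: skew_mult_apply)
    also have "\<dots> = \<zero>\<^bsub>R\<^esub>"
      using skew_term_inv_coset_zero[OF a b] True by (intro R.add.finprod_one_eqI) blast
    also have "\<dots> = delta_one ((a \<otimes>\<^bsub>S\<^esub> b) \<one>\<^bsub>G\<^esub>) x"
      using True unfolding delta_one_def by (rule if_not_P[symmetric, OF conjunct2])
    finally show ?thesis .
  next
    case False
    then consider "x = \<one>\<^bsub>G\<^esub>" | "x \<notin> carrier G" "x \<noteq> \<one>\<^bsub>G\<^esub>"
      using G.one_closed by blast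
    then show ?thesis by cases (simp_all add: delta_one_def skew_mult_outside)
  qed
qed

lemma component_mult_inv_coset_at_one:
  assumes a: "a \<in> T C" and b: "b \<in> T (inv\<^bsub>Q\<^esub> C)"
  shows "(a \<otimes>\<^bsub>S\<^esub> b) \<one>\<^bsub>G\<^esub> \<in> coset_corner C"
  unfolding skew_mult_apply[OF G.one_closed]
proof (rule R.finsum_mem)
  have a_S: "a \<in> carrier S" and b_S: "b \<in> carrier S" using a b by (simp_all add: mem_component_iff)
  show "finite (supp a)" using a_S by (rule skew_carrier_finite)
  show "skew_term a b \<one>\<^bsub>G\<^esub> \<in> supp a \<rightarrow> coset_corner C"
  proof
    fix g assume "g \<in> supp a"
    then have "g \<in> C" and "g \<in> carrier G"
      using a skew_support_subset by (auto simp: mem_component_iff)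
    then show "skew_term a b \<one>\<^bsub>G\<^esub> g \<in> coset_corner C"
      using skew_term_closed_source[OF a_S b_S] D_subset_coset_corner by blast
  qed
  show "coset_corner C \<subseteq> carrier R" by (auto simp: coset_corner_def)
qed (simp_all add: coset_corner_zero coset_corner_add)

lemma sum_prods_inv_coset_subset:
  "sum_prods S (T C) (T (inv\<^bsub>Q\<^esub> C)) \<subseteq> delta_one ` coset_corner C"
proof (rule sum_prods_subset)
  show "\<zero>\<^bsub>S\<^esub> \<in> delta_one ` coset_corner C"
    unfolding delta_one_zero[symmetric] using coset_corner_zero by (rule imageI)
  show "a \<otimes>\<^bsub>S\<^esub> b \<in> delta_one ` coset_corner C" if "a \<in> T C" "b \<in> T (inv\<^bsub>Q\<^esub> C)" for a b
    using component_mult_inv_coset[OF that] component_mult_inv_coset_at_one[OF that] by (rule image_eqI)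
  fix x y assume "x \<in> delta_one ` coset_corner C" and "y \<in> delta_one ` coset_corner C"
  then obtain r r' where r: "r \<in> coset_corner C" "r' \<in> coset_corner C"
    and xy: "x \<oplus>\<^bsub>S\<^esub> y = delta_one (r \<oplus>\<^bsub>R\<^esub> r')"
    using delta_one_add by blast
  show "x \<oplus>\<^bsub>S\<^esub> y \<in> delta_one ` coset_corner C"
    unfolding xy using coset_corner_add[OF r] by (rule imageI)
qed

end

context
  fixes C assumes C: "C \<in> carrier Q" and C_nontrivial: "C \<noteq> N"
begin

lemma coset_section_mult:
  "coset_section C \<otimes>\<^bsub>S\<^esub> coset_section (inv\<^bsub>Q\<^esub> C) = delta_one (coset_unit C)"
proof -
  have "skew_term (coset_section C) (coset_section (inv\<^bsub>Q\<^esub> C)) \<one>\<^bsub>G\<^esub> g = ideal_one g"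
    if "g \<in> supp (coset_section C)" for g
  proof -
    have g_C: "g \<in> C" and g_G: "g \<in> carrier G"
      using that supp_coset_section skew_support_subset by blast+
    have g': "inv\<^bsub>G\<^esub> g \<in> carrier G" using g_G by simp
    have "inv\<^bsub>G\<^esub> g \<in> inv\<^bsub>Q\<^esub> C" using inv_mem_inv_coset[OF C g_C] .
    then have "skew_term (coset_section C) (coset_section (inv\<^bsub>Q\<^esub> C)) \<one>\<^bsub>G\<^esub> g
        = ideal_one g \<otimes>\<^bsub>R\<^esub> \<alpha> g (ideal_one (inv\<^bsub>G\<^esub> g) \<otimes>\<^bsub>R\<^esub> ideal_one (inv\<^bsub>G\<^esub> g))"
      using g_C g' by (simp add: skew_term_def coset_section_def)
    also have "\<dots> = ideal_one g"
      using ideal_one_r[OF g' ideal_one_closed[OF g']] alpha_ideal_one[OF g_G]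
        ideal_one_r[OF g_G ideal_one_closed[OF g_G]] by simp
    finally show ?thesis .
  qed
  then have "(coset_section C \<otimes>\<^bsub>S\<^esub> coset_section (inv\<^bsub>Q\<^esub> C)) \<one>\<^bsub>G\<^esub> = coset_unit C"
    unfolding skew_mult_apply[OF G.one_closed] coset_unit_def
    using ideal_one_carrier skew_support_subset by (intro R.finsum_cong') auto
  then show ?thesis
    using component_mult_inv_coset[OF C C_nontrivial coset_section_component[OF C C_nontrivial]
        coset_section_component[OF inv_coset[OF C C_nontrivial]]] by simp
qed

lemma coset_unit_is_mult_identity:
  "is_mult_identity S (sum_prods S (T C) (T (inv\<^bsub>Q\<^esub> C))) (delta_one (coset_unit C))"
  unfolding is_mult_identity_def
proof (intro conjI ballI)
  show "delta_one (coset_unit C) \<in> sum_prods S (T C) (T (inv\<^bsub>Q\<^esub> C))"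
    unfolding coset_section_mult[symmetric]
    using coset_section_component[OF C C_nontrivial] coset_section_component[OF inv_coset[OF C C_nontrivial]]
    by (rule sum_prods.sp_prod)
  fix p assume "p \<in> sum_prods S (T C) (T (inv\<^bsub>Q\<^esub> C))"
  then obtain r where r: "r \<in> coset_corner C" and p: "p = delta_one r"
    using sum_prods_inv_coset_subset[OF C C_nontrivial] by blast
  have r_R: "r \<in> carrier R" using r by (simp add: coset_corner_def)
  show "delta_one (coset_unit C) \<otimes>\<^bsub>S\<^esub> p = p" and "p \<otimes>\<^bsub>S\<^esub> delta_one (coset_unit C) = p"
    unfolding p using r r_R coset_unit_closed
    by (simp_all add: delta_one_mult coset_corner_def)
qed

lemma coset_unit_mult_component:
  assumes x: "x \<in> T C"
  shows "delta_one (coset_unit C) \<otimes>\<^bsub>S\<^esub> x = x"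
proof
  fix g
  have x_S: "x \<in> carrier S" using x by (simp add: mem_component_iff)
  show "(delta_one (coset_unit C) \<otimes>\<^bsub>S\<^esub> x) g = x g"
    unfolding delta_one_mult_apply[OF coset_unit_closed x_S]
  proof (cases "g \<in> C")
    case True
    then have "x g \<in> D g" using x_S coset_subset[OF C] skew_carrier_D by blast
    then show "coset_unit C \<otimes>\<^bsub>R\<^esub> x g = x g"
      using D_subset_coset_corner[OF C C_nontrivial True] by (auto simp: coset_corner_def)
  next
    case False
    then show "coset_unit C \<otimes>\<^bsub>R\<^esub> x g = x g"
      using component_apply_outside[OF x] coset_unit_closed by simp
  qed
qed

end

theorem skew_epsilon_crossed_product: "epsilon_crossed_product S Q T"
proof (rule epsilon_crossed_productI[OF quotient_group component_grading])
  fix C assume C: "C \<in> carrier Q"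
  show "\<exists>s\<in>T C. \<exists>t\<in>T (inv\<^bsub>Q\<^esub> C).
          is_mult_identity S (sum_prods S (T C) (T (inv\<^bsub>Q\<^esub> C))) (s \<otimes>\<^bsub>S\<^esub> t) \<and>
          is_mult_identity S (sum_prods S (T (inv\<^bsub>Q\<^esub> C)) (T C)) (t \<otimes>\<^bsub>S\<^esub> s) \<and>
          (\<forall>x\<in>T C. (s \<otimes>\<^bsub>S\<^esub> t) \<otimes>\<^bsub>S\<^esub> x = x)"
  proof (cases "C = N")
    case True
    have "inv\<^bsub>Q\<^esub> N = N" using monoid.inv_one[OF group.is_monoid[OF quotient_group]] by simp
    moreover have "\<one>\<^bsub>S\<^esub> \<otimes>\<^bsub>S\<^esub> \<one>\<^bsub>S\<^esub> = \<one>\<^bsub>S\<^esub>"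
      using skew_one_left[OF delta_one_closed[OF R.one_closed]] by (simp add: skew_one)
    ultimately show ?thesis
      using True skew_one_component skew_one_is_mult_identity skew_one_left
      by (intro bexI[of _ "\<one>\<^bsub>S\<^esub>"]) (auto simp: mem_component_iff)
  next
    case False
    have C': "inv\<^bsub>Q\<^esub> C \<in> carrier Q" "inv\<^bsub>Q\<^esub> C \<noteq> N" and inv_inv: "inv\<^bsub>Q\<^esub> (inv\<^bsub>Q\<^esub> C) = C"
      using inv_coset[OF C False] group.inv_inv[OF quotient_group C] by simp_all
    show ?thesis
    proof (intro bexI conjI)
      show "coset_section C \<in> T C" and "coset_section (inv\<^bsub>Q\<^esub> C) \<in> T (inv\<^bsub>Q\<^esub> C)"
        using coset_section_component C C' False by simp_all
      show "is_mult_identity S (sum_prods S (T C) (T (inv\<^bsub>Q\<^esub> C)))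
          (coset_section C \<otimes>\<^bsub>S\<^esub> coset_section (inv\<^bsub>Q\<^esub> C))"
        using coset_unit_is_mult_identity[OF C False] coset_section_mult[OF C False] by simp
      show "is_mult_identity S (sum_prods S (T (inv\<^bsub>Q\<^esub> C)) (T C))
          (coset_section (inv\<^bsub>Q\<^esub> C) \<otimes>\<^bsub>S\<^esub> coset_section C)"
        using coset_unit_is_mult_identity[OF C'] coset_section_mult[OF C'] inv_inv by simp
      show "\<forall>x\<in>T C. (coset_section C \<otimes>\<^bsub>S\<^esub> coset_section (inv\<^bsub>Q\<^esub> C)) \<otimes>\<^bsub>S\<^esub> x = x"
        using coset_unit_mult_component[OF C False] coset_section_mult[OF C False] by simp
    qed
  qed
qed

end

theorem proposition8p3:
  fixes G :: "('g, 'b) monoid_scheme" and R :: "('r, 'c) ring_scheme"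
    and D :: "'g \<Rightarrow> 'r set" and \<alpha> :: "'g \<Rightarrow> 'r \<Rightarrow> 'r"
  assumes "group G" and "ring R"
    and "unital_partial_action G R D \<alpha>"
    and "\<forall>g\<in>carrier G. \<forall>h\<in>carrier G. g \<noteq> h \<and> g \<noteq> \<one>\<^bsub>G\<^esub> \<and> h \<noteq> \<one>\<^bsub>G\<^esub>
           \<longrightarrow> sum_prods R (D g) (D h) = {\<zero>\<^bsub>R\<^esub>}"
    and "finite (unit_of_ideal R D ` carrier G)"
  shows "\<forall>N. N \<lhd> G \<longrightarrow>
           epsilon_crossed_product (partial_skew_group_ring R G D \<alpha>) (G Mod N)
             (induced_quotient_component R G D \<alpha>)"
proof (intro allI impI)
  fix N assume "N \<lhd> G"
  with assms interpret orthogonal_partial_action_quotient G R D \<alpha> N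
    by (simp add: orthogonal_partial_action_quotient_def unital_partial_action_quotient_def
        unital_partial_action_quotient_axioms_def orthogonal_partial_action_def
        orthogonal_partial_action_axioms_def unital_partial_action_ring_def
        unital_partial_action_ring_axioms_def)
  show "epsilon_crossed_product (partial_skew_group_ring R G D \<alpha>) (G Mod N)
      (induced_quotient_component R G D \<alpha>)"
    by (rule skew_epsilon_crossed_product)
qed

end
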